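(* Let $x>0$ and $p\in\mathbb{R}$. (i) If $p\in[0,1/2]$, then $W_p(x,1)\ge \hat{A}_p(x,1)$. (ii) If $p\notin(0,1/2)$, then $W_p(x,1)\le \hat{A}_p(x,1)$.
   Context: For $x>0$, $x\ne 1$ and $p\ne 0$: $\hat{A}_p(x,1)=\frac{p(x^p+1)(x-1)}{2(x^p-1)}$, with $\hat A_p(1,1)=1$ and $\hat{A}_0(x,1)=\frac{x-1}{\log x}$ (limiting value). The Wigner--Yanase--Dyson function for $p\in\mathbb{R}\setminus\{0,1\}$, $x\ne 1$ is $W_p(x,1)=\frac{p(1-p)(x-1)^2}{(x^p-1)(x^{1-p}-1)}$, with $W_p(1,1)=1$ and $W_0(x,1)=W_1(x,1)=\frac{x-1}{\log x}$ (limiting value). *)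

theory Defs
  imports Complex_Main
begin

text \<open>Power difference mean A-hat_p(x,1), with limiting values at x = 1 and p = 0.\<close>
definition Ahat :: "real \<Rightarrow> real \<Rightarrow> real" where
  "Ahat p x =
     (if x = 1 then 1
      else if p = 0 then (x - 1) / ln x
      else p * (x powr p + 1) * (x - 1) / (2 * (x powr p - 1)))"

text \<open>Wigner-Yanase-Dyson function W_p(x,1), with limiting values at x = 1 and p = 0, 1.\<close>
definition WYD :: "real \<Rightarrow> real \<Rightarrow> real" where
  "WYD p x =
     (if x = 1 then 1
      else if p = 0 \<or> p = 1 then (x - 1) / ln x
      else p * (1 - p) * (x - 1)^2 / ((x powr p - 1) * (x powr (1 - p) - 1)))"

end

theory Submission
  imports Defs
begin

text \<open>
  Write \<open>x = exp (2u)\<close>. Then \<open>x - 1 = 2 exp u sinh u\<close>, and similarly for \<open>x powr p \<plusminus> 1\<close>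
  and \<open>x powr (1 - p) - 1\<close>; with the product-to-sum formula
  \<open>2 cosh (p u) sinh ((1 - p) u) = sinh u + sinh ((1 - 2p) u)\<close> the difference \<open>Ahat - WYD\<close>
  becomes a positive multiple of \<open>(1 - p) u (sinh (q u) - q sinh u)\<close> with \<open>q = 1 - 2p\<close>.
  Since \<open>sinh t / t\<close> increases on \<open>t > 0\<close>, we have \<open>sinh (q v) \<le> q sinh v\<close> for
  \<open>0 \<le> q \<le> 1\<close> and the reverse inequality for \<open>q \<ge> 1\<close> (\<open>v \<ge> 0\<close>); oddness of \<open>sinh\<close>
  settles the remaining signs. The degenerate case \<open>p = 1\<close> is the inequality between the
  logarithmic and the arithmetic mean, which again reduces to \<open>sinh u \<le> u cosh u\<close>.
\<close>

lemma sinh_le_mult_cosh: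
  fixes v :: real
  assumes "0 \<le> v"
  shows "sinh v \<le> v * cosh v"
proof -
  have "(\<lambda>t. t * cosh t - sinh t) 0 \<le> (\<lambda>t. t * cosh t - sinh t) v"
  proof (rule DERIV_nonneg_imp_nondecreasing[OF assms])
    fix t :: real
    assume "0 \<le> t" "t \<le> v"
    moreover have "((\<lambda>t. t * cosh t - sinh t) has_real_derivative t * sinh t) (at t)"
      by (auto intro!: derivative_eq_intros)
    ultimately show "\<exists>y. ((\<lambda>t. t * cosh t - sinh t) has_real_derivative y) (at t) \<and> 0 \<le> y"
      by auto
  qed
  then show ?thesis
    by simp
qed

lemma sinh_div_le_cosh: "sinh u / u \<le> cosh (u :: real)"
proof (cases "u \<ge> 0")
  case True
  then show ?thesis
    using sinh_le_mult_cosh[of u] by (cases "u = 0") (auto simp: divide_le_eq mult.commute)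
next
  case False
  then show ?thesis
    using sinh_le_mult_cosh[of "-u"] by (auto simp: divide_le_eq mult.commute)
qed

lemma sinh_div_mono:
  fixes s t :: real
  assumes "0 < s" "s \<le> t"
  shows "sinh s / s \<le> sinh t / t"
proof (rule DERIV_nonneg_imp_nondecreasing[OF assms(2)])
  fix r :: real
  assume "s \<le> r" "r \<le> t"
  then have "0 < r"
    using assms by simp
  then have "((\<lambda>r. sinh r / r) has_real_derivative (r * cosh r - sinh r) / r^2) (at r)"
    by (auto intro!: derivative_eq_intros simp: power2_eq_square field_simps)
  moreover have "0 \<le> (r * cosh r - sinh r) / r^2"
    using sinh_le_mult_cosh[of r] \<open>0 < r\<close> by simp
  ultimately show "\<exists>y. ((\<lambda>r. sinh r / r) has_real_derivative y) (at r) \<and> 0 \<le> y"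
    by blast
qed

lemma sinh_mult_le:
  fixes q v :: real
  assumes "0 \<le> q" "q \<le> 1" "0 \<le> v"
  shows "sinh (q * v) \<le> q * sinh v"
proof (cases "q = 0 \<or> v = 0")
  case False
  with assms have "0 < q * v" "q * v \<le> v"
    by (auto simp: mult_left_le_one_le)
  then have "sinh (q * v) / (q * v) \<le> sinh v / v"
    by (rule sinh_div_mono)
  then show ?thesis
    using \<open>0 < q * v\<close> False assms by (simp add: field_simps)
qed auto

lemma sinh_mult_ge:
  fixes q v :: real
  assumes "1 \<le> q" "0 \<le> v"
  shows "q * sinh v \<le> sinh (q * v)"
proof (cases "v = 0")
  case False
  with assms have "0 < v" "v \<le> q * v"
    by (auto simp: mult_le_cancel_right1)
  then have "sinh v / v \<le> sinh (q * v) / (q * v)"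
    by (rule sinh_div_mono)
  then show ?thesis
    using \<open>0 < v\<close> assms by (simp add: field_simps)
qed auto

definition sinh_defect :: "real \<Rightarrow> real \<Rightarrow> real" where
  "sinh_defect q u = sinh (q * u) - q * sinh u"

lemma sinh_defect_uminus_left: "sinh_defect (-q) u = - sinh_defect q u"
  by (simp add: sinh_defect_def)

lemma sinh_defect_sign_nonpos:
  assumes "0 \<le> q" "q \<le> 1"
  shows "u * sinh_defect q u \<le> 0"
proof (cases "u \<ge> 0")
  case True
  then show ?thesis
    using sinh_mult_le[OF assms True] by (simp add: sinh_defect_def mult_nonneg_nonpos)
next
  case False
  then show ?thesis
    using sinh_mult_le[OF assms, of "-u"] by (simp add: sinh_defect_def mult_nonpos_nonneg)
qed

lemma sinh_defect_sign_nonneg: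
  assumes "1 \<le> q"
  shows "0 \<le> u * sinh_defect q u"
proof (cases "u \<ge> 0")
  case True
  then show ?thesis
    using sinh_mult_ge[OF assms True] by (simp add: sinh_defect_def)
next
  case False
  then show ?thesis
    using sinh_mult_ge[OF assms, of "-u"] by (simp add: sinh_defect_def mult_nonpos_nonpos)
qed

lemma sinh_defect_weighted_nonpos:
  assumes "0 \<le> p" "p \<le> 1/2"
  shows "(1 - p) * (u * sinh_defect (1 - 2*p) u) \<le> 0"
  using sinh_defect_sign_nonpos[of "1 - 2*p" u] assms by (simp add: mult_nonneg_nonpos)

lemma sinh_defect_weighted_nonneg:
  assumes "p \<notin> {0<..<1/2}"
  shows "0 \<le> (1 - p) * (u * sinh_defect (1 - 2*p) u)"
proof -
  consider "p \<le> 0" | "1/2 \<le> p" "p \<le> 1" | "1 < p"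
    using assms by force
  then show ?thesis
  proof cases
    case 1
    then show ?thesis
      using sinh_defect_sign_nonneg[of "1 - 2*p" u] by simp
  next
    case 2
    then have "u * sinh_defect (2*p - 1) u \<le> 0"
      by (intro sinh_defect_sign_nonpos) auto
    then show ?thesis
      using 2 sinh_defect_uminus_left[of "1 - 2*p" u] by simp
  next
    case 3
    then have "0 \<le> u * sinh_defect (2*p - 1) u"
      by (intro sinh_defect_sign_nonneg) auto
    then show ?thesis
      using 3 sinh_defect_uminus_left[of "1 - 2*p" u] by (simp add: mult_nonpos_nonpos)
  qed
qed

lemma exp_double_minus_one: "exp (2 * t) - 1 = 2 * exp t * sinh (t :: real)"
  by (simp add: sinh_def exp_minus field_simps flip: exp_add)

lemma exp_double_plus_one: "exp (2 * t) + 1 = 2 * exp t * cosh (t :: real)"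
  by (simp add: cosh_def exp_minus field_simps flip: exp_add)

lemma Ahat_exp_double:
  assumes "u \<noteq> 0" "p \<noteq> 0"
  shows "Ahat p (exp (2*u)) = p * exp u * sinh u * cosh (p*u) / sinh (p*u)"
proof -
  have "exp (2*u) powr p = exp (2 * (p*u))"
    by (simp add: exp_powr_real)
  then show ?thesis
    using assms by (simp add: Ahat_def exp_double_minus_one exp_double_plus_one)
qed

lemma WYD_exp_double:
  assumes "u \<noteq> 0" "p \<noteq> 0" "p \<noteq> 1"
  shows "WYD p (exp (2*u)) = p * (1 - p) * exp u * (sinh u)^2 / (sinh (p*u) * sinh ((1 - p)*u))"
proof -
  have "exp (2*u) powr p - 1 = 2 * exp (p*u) * sinh (p*u)"
    "exp (2*u) powr (1 - p) - 1 = 2 * exp ((1 - p)*u) * sinh ((1 - p)*u)"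
    using exp_double_minus_one[of "p*u"] exp_double_minus_one[of "(1 - p)*u"]
    by (simp_all add: exp_powr_real mult_ac)
  moreover have "exp (p*u) * exp ((1 - p)*u) = exp u"
    by (simp flip: exp_add add: algebra_simps)
  ultimately show ?thesis
    using assms by (simp add: WYD_def exp_double_minus_one power2_eq_square divide_simps)
qed

lemma cosh_mult_sinh_eq:
  "2 * cosh (p*u) * sinh ((1 - p)*u) = sinh u + sinh ((1 - 2*p)*u :: real)"
  using sinh_add[of "(1 - p)*u" "p*u"] sinh_diff[of "(1 - p)*u" "p*u"]
  by (simp add: algebra_simps)

lemma Ahat_minus_WYD_exp_double:
  assumes "u \<noteq> 0" "p \<noteq> 0" "p \<noteq> 1"
  shows "Ahat p (exp (2*u)) - WYD p (exp (2*u))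
    = exp u * (p * sinh u / sinh (p*u)) / (2 * (((1 - p)*u) * sinh ((1 - p)*u)))
      * ((1 - p) * (u * sinh_defect (1 - 2*p) u))"
proof -
  have "Ahat p (exp (2*u)) - WYD p (exp (2*u))
      = exp u * (p * sinh u / sinh (p*u))
        * (2 * cosh (p*u) * sinh ((1 - p)*u) - 2 * (1 - p) * sinh u) / (2 * sinh ((1 - p)*u))"
    unfolding Ahat_exp_double[OF assms(1,2)] WYD_exp_double[OF assms]
    using assms by (simp add: power2_eq_square field_simps)
  also have "\<dots> = exp u * (p * sinh u / sinh (p*u)) * sinh_defect (1 - 2*p) u
      / (2 * sinh ((1 - p)*u))"
    by (simp only: cosh_mult_sinh_eq) (simp add: sinh_defect_def algebra_simps)
  also have "\<dots> = exp u * (p * sinh u / sinh (p*u)) / (2 * (((1 - p)*u) * sinh ((1 - p)*u)))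
      * ((1 - p) * (u * sinh_defect (1 - 2*p) u))"
    using assms by (simp add: field_simps)
  finally show ?thesis .
qed

lemma mult_sinh_pos: "t \<noteq> 0 \<Longrightarrow> 0 < t * sinh (t :: real)"
  by (cases "t > 0") (auto simp: mult_neg_neg)

lemma sinh_ratio_pos:
  assumes "p \<noteq> 0" "u \<noteq> 0"
  shows "0 < p * sinh u / sinh (p*u :: real)"
  using assms
  by (cases "p > 0"; cases "u > 0") (auto simp: zero_less_divide_iff zero_less_mult_iff mult_less_0_iff)

lemma logmean_le_arith_mean:
  fixes x :: real
  assumes "0 < x"
  shows "(x - 1) / ln x \<le> (x + 1) / 2"
proof -
  define u where "u = ln x / 2"
  have x: "x = exp (2*u)"
    using assms by (simp add: u_def)
  have "(x - 1) / ln x = exp u * (sinh u / u)"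
    by (simp add: x exp_double_minus_one)
  also have "\<dots> \<le> exp u * cosh u"
    by (rule mult_left_mono) (simp_all add: sinh_div_le_cosh)
  also have "\<dots> = (x + 1) / 2"
    by (simp add: x exp_double_plus_one)
  finally show ?thesis .
qed

theorem theorem3p1:
  fixes x p :: real
  assumes "x > 0"
  shows "(0 \<le> p \<and> p \<le> 1/2 \<longrightarrow> WYD p x \<ge> Ahat p x)
       \<and> (p \<notin> {0<..<1/2} \<longrightarrow> WYD p x \<le> Ahat p x)"
proof -
  consider "x = 1 \<or> p = 0" | "x \<noteq> 1" "p = 1" | "x \<noteq> 1" "p \<noteq> 0" "p \<noteq> 1"
    by blast
  then show ?thesis
  proof cases
    case 1
    then show ?thesis
      by (auto simp: Ahat_def WYD_def)
  next
    case 2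
    then have "WYD p x = (x - 1) / ln x" "Ahat p x = (x + 1) / 2"
      using assms by (simp_all add: Ahat_def WYD_def field_simps)
    then have "WYD p x \<le> Ahat p x"
      using logmean_le_arith_mean[OF assms] by (simp only:)
    then show ?thesis
      using \<open>p = 1\<close> by simp
  next
    case 3
    define u where "u = ln x / 2"
    have x: "x = exp (2*u)" and "u \<noteq> 0"
      using assms 3 by (auto simp: u_def)
    define K where
      "K = exp u * (p * sinh u / sinh (p*u)) / (2 * (((1 - p)*u) * sinh ((1 - p)*u)))"
    have "0 < K"
      unfolding K_def using 3 \<open>u \<noteq> 0\<close>
      by (intro divide_pos_pos mult_pos_pos sinh_ratio_pos mult_sinh_pos) auto
    have "Ahat p x - WYD p x = K * ((1 - p) * (u * sinh_defect (1 - 2*p) u))"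
      unfolding x K_def using \<open>u \<noteq> 0\<close> 3(2,3) by (rule Ahat_minus_WYD_exp_double)
    then have "Ahat p x - WYD p x \<le> 0 \<longleftrightarrow> (1 - p) * (u * sinh_defect (1 - 2*p) u) \<le> 0"
      and "0 \<le> Ahat p x - WYD p x \<longleftrightarrow> 0 \<le> (1 - p) * (u * sinh_defect (1 - 2*p) u)"
      using \<open>0 < K\<close> by (simp_all add: mult_le_0_iff zero_le_mult_iff)
    then show ?thesis
      using sinh_defect_weighted_nonpos[of p u] sinh_defect_weighted_nonneg[of p u] by auto
  qed
qed

end
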